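(* Let $\mathcal{G}$ be a discrete hypergroup, $X$ a $\mathcal{G}$-boundary and $Y$ a minimal compact $\mathcal{G}$-space. Then every $\mathcal{G}$-equivariant unital completely positive map $\mathrm{C}(X)\to\mathrm{C}(Y)$ is injective. If moreover $\mathrm{C}(X)$ is $\mathcal{G}$-injective, then $\mathrm{C}(X)$ is $\mathcal{G}$-rigid.
   Context: A discrete hypergroup is a discrete set $\mathcal{G}$ with unit $e$, an involution $g\mapsto\overline{g}$ and an associative convolution product $*$ on probability measures on $\mathcal{G}$ (points identified with point masses) such that $g*e=e*g=g$, $\overline{\overline{g}}=g$, $\overline{g*h}=\overline{h}*\overline{g}$, $e\in\mathrm{supp}(g*h)$ iff $h=\overline{g}$, and $\mathrm{supp}(\mu*\nu)$ is finite for finitely supported $\mu,\nu$. A $\mathcal{G}$-operator system is an operator system $S$ with unital completely positive (ucp) maps $\alpha_g$ ($g\in\mathcal{G}$), written $gx=\alpha_g(x)$, such that $\alpha_e=\mathrm{id}_S$ and $\alpha_g\circ\alpha_h=\int\alpha_k\,d(\delta_g*\delta_h)(k)$; a map $\varphi$ is $\mathcal{G}$-equivariant if $\varphi(gx)=g\varphi(x)$. A $\mathcal{G}$-action on a compact space $Z$ is a $\mathcal{G}$-operator system structure on $\mathrm{C}(Z)$; $\mathcal{G}$ then acts on $\mathcal{P}(Z)$ by the dual maps. $Z$ is minimal if $\overline{\mathrm{conv}}(\mathcal{G}\delta_z)=\mathcal{P}(Z)$ for every $z\in Z$; strongly proximal if for every $\mu\in\mathcal{P}(Z)$ the closure $\overline{\mathcal{G}\mu}$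 contains a point mass; a $\mathcal{G}$-boundary if both. $\mathrm{C}(X)$ is $\mathcal{G}$-injective if for all $\mathcal{G}$-operator systems $S\subseteq R$ every $\mathcal{G}$-equivariant ucp map $S\to\mathrm{C}(X)$ extends to a $\mathcal{G}$-equivariant ucp map $R\to\mathrm{C}(X)$. $\mathrm{C}(X)$ is $\mathcal{G}$-rigid if every $\mathcal{G}$-equivariant ucp map $\mathrm{C}(X)\to\mathrm{C}(X)$ is the identity map. *)

theory Defs
  imports "HOL-Analysis.Analysis" "HOL-Probability.Probability_Mass_Function"
          "HOL-Library.Function_Algebras"
begin

text \<open>A discrete hypergroup on the type 'g: the convolution of point masses
  delta_g * delta_h is the probability measure conv g h (a pmf); the convolution
  of general probability measures is its (bi)linear extension, i.e. bind_pmf.\<close>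

definition hypergroup :: "('g \<Rightarrow> 'g \<Rightarrow> 'g pmf) \<Rightarrow> 'g \<Rightarrow> ('g \<Rightarrow> 'g) \<Rightarrow> bool" where
  "hypergroup cv e iv \<longleftrightarrow>
     (\<forall>g. cv g e = return_pmf g \<and> cv e g = return_pmf g) \<and>
     (\<forall>g. iv (iv g) = g) \<and>
     (\<forall>g h. map_pmf iv (cv g h) = cv (iv h) (iv g)) \<and>
     (\<forall>g h. e \<in> set_pmf (cv g h) \<longleftrightarrow> h = iv g) \<and>
     (\<forall>g h. finite (set_pmf (cv g h))) \<and>
     (\<forall>g h l. bind_pmf (cv g h) (\<lambda>k. cv k l) = bind_pmf (cv h l) (\<lambda>k. cv g k))"

text \<open>Addition/zero come from the type class ab_group_add; complex scalar
  multiplication, involution, unit and the matrix cones are part of the record.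
  An n x n matrix over the system is a function nat => nat => 'r of which only the
  entries with indices < n are relevant.\<close>

record 'r opsys =
  os_carrier :: "'r set"
  os_smult :: "complex \<Rightarrow> 'r \<Rightarrow> 'r"
  os_star :: "'r \<Rightarrow> 'r"
  os_unit :: "'r"
  os_pos :: "nat \<Rightarrow> (nat \<Rightarrow> nat \<Rightarrow> 'r) \<Rightarrow> bool"

definition mat_in :: "'r set \<Rightarrow> nat \<Rightarrow> (nat \<Rightarrow> nat \<Rightarrow> 'r) \<Rightarrow> bool" where
  "mat_in V n A \<longleftrightarrow> (\<forall>i<n. \<forall>j<n. A i j \<in> V)"

definition os_scalar_id :: "('r::ab_group_add) opsys \<Rightarrow> real \<Rightarrow> nat \<Rightarrow> nat \<Rightarrow> 'r" where
  "os_scalar_id R r = (\<lambda>i j. if i = j then os_smult R (complex_of_real r) (os_unit R) else 0)"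

text \<open>alpha^* A alpha for a complex m x n matrix alpha and an m x m matrix A.\<close>
definition os_congr :: "('r::ab_group_add) opsys \<Rightarrow> nat \<Rightarrow> (nat \<Rightarrow> nat \<Rightarrow> complex)
     \<Rightarrow> (nat \<Rightarrow> nat \<Rightarrow> 'r) \<Rightarrow> nat \<Rightarrow> nat \<Rightarrow> 'r" where
  "os_congr R m \<alpha> A = (\<lambda>k l. \<Sum>i<m. \<Sum>j<m. os_smult R (cnj (\<alpha> i k) * \<alpha> j l) (A i j))"

definition operator_system :: "('r::ab_group_add) opsys \<Rightarrow> bool" where
  "operator_system R \<longleftrightarrow>
    (let V = os_carrier R; sm = os_smult R; st = os_star R; u = os_unit R; P = os_pos R in
     0 \<in> V \<and> (\<forall>x\<in>V. \<forall>y\<in>V. x + y \<in> V) \<and> (\<forall>a. \<forall>x\<in>V. sm a x \<in> V) \<and>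
     (\<forall>x\<in>V. sm 1 x = x) \<and>
     (\<forall>a b. \<forall>x\<in>V. sm a (sm b x) = sm (a * b) x) \<and>
     (\<forall>a b. \<forall>x\<in>V. sm (a + b) x = sm a x + sm b x) \<and>
     (\<forall>a. \<forall>x\<in>V. \<forall>y\<in>V. sm a (x + y) = sm a x + sm a y) \<and>
     (\<forall>x\<in>V. st x \<in> V \<and> st (st x) = x) \<and>
     (\<forall>x\<in>V. \<forall>y\<in>V. st (x + y) = st x + st y) \<and>
     (\<forall>a. \<forall>x\<in>V. st (sm a x) = sm (cnj a) (st x)) \<and>
     u \<in> V \<and> st u = u \<and>
     (\<forall>n A B. (\<forall>i<n. \<forall>j<n. A i j = B i j) \<longrightarrow> P n A = P n B) \<and>
     (\<forall>n A. P n A \<longrightarrow> mat_in V n A \<and> (\<forall>i<n. \<forall>j<n. st (A i j) = A j i)) \<and>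
     (\<forall>n A B. P n A \<and> P n B \<longrightarrow> P n (\<lambda>i j. A i j + B i j)) \<and>
     (\<forall>n A r. P n A \<and> r \<ge> 0 \<longrightarrow> P n (\<lambda>i j. sm (complex_of_real r) (A i j))) \<and>
     (\<forall>n A. P n A \<and> P n (\<lambda>i j. - A i j) \<longrightarrow> (\<forall>i<n. \<forall>j<n. A i j = 0)) \<and>
     (\<forall>m n \<alpha> A. P m A \<longrightarrow> P n (os_congr R m \<alpha> A)) \<and>
     (\<forall>n A. mat_in V n A \<and> (\<forall>i<n. \<forall>j<n. st (A i j) = A j i) \<longrightarrow>
        (\<exists>r>0. P n (\<lambda>i j. A i j + os_scalar_id R r i j)) \<and>
        ((\<forall>r>0. P n (\<lambda>i j. A i j + os_scalar_id R r i j)) \<longrightarrow> P n A)))"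

definition ucp :: "('a::ab_group_add) opsys \<Rightarrow> ('b::ab_group_add) opsys \<Rightarrow> ('a \<Rightarrow> 'b) \<Rightarrow> bool" where
  "ucp R1 R2 \<phi> \<longleftrightarrow>
     (\<forall>x\<in>os_carrier R1. \<phi> x \<in> os_carrier R2) \<and>
     (\<forall>x\<in>os_carrier R1. \<forall>y\<in>os_carrier R1. \<phi> (x + y) = \<phi> x + \<phi> y) \<and>
     (\<forall>a. \<forall>x\<in>os_carrier R1. \<phi> (os_smult R1 a x) = os_smult R2 a (\<phi> x)) \<and>
     \<phi> (os_unit R1) = os_unit R2 \<and>
     (\<forall>n A. os_pos R1 n A \<longrightarrow> os_pos R2 n (\<lambda>i j. \<phi> (A i j)))"

definition os_restrict :: "'r opsys \<Rightarrow> 'r set \<Rightarrow> 'r opsys" where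
  "os_restrict R S = R\<lparr>os_carrier := S, os_pos := (\<lambda>n A. os_pos R n A \<and> mat_in S n A)\<rparr>"

definition G_opsys :: "('g \<Rightarrow> 'g \<Rightarrow> 'g pmf) \<Rightarrow> 'g \<Rightarrow> ('r::ab_group_add) opsys
     \<Rightarrow> ('g \<Rightarrow> 'r \<Rightarrow> 'r) \<Rightarrow> bool" where
  "G_opsys cv e R \<alpha> \<longleftrightarrow>
     operator_system R \<and> (\<forall>g. ucp R R (\<alpha> g)) \<and>
     (\<forall>x\<in>os_carrier R. \<alpha> e x = x) \<and>
     (\<forall>g h. \<forall>x\<in>os_carrier R. \<alpha> g (\<alpha> h x) =
        (\<Sum>k\<in>set_pmf (cv g h). os_smult R (complex_of_real (pmf (cv g h) k)) (\<alpha> k x)))"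

definition G_equivariant :: "('a::ab_group_add) opsys \<Rightarrow> ('g \<Rightarrow> 'a \<Rightarrow> 'a)
     \<Rightarrow> ('g \<Rightarrow> 'b \<Rightarrow> 'b) \<Rightarrow> ('a \<Rightarrow> 'b) \<Rightarrow> bool" where
  "G_equivariant R1 \<alpha>1 \<alpha>2 \<phi> \<longleftrightarrow> (\<forall>g. \<forall>x\<in>os_carrier R1. \<phi> (\<alpha>1 g x) = \<alpha>2 g (\<phi> x))"

definition psd_mat :: "nat \<Rightarrow> (nat \<Rightarrow> nat \<Rightarrow> complex) \<Rightarrow> bool" where
  "psd_mat n M \<longleftrightarrow> (\<forall>v. (\<Sum>i<n. \<Sum>j<n. cnj (v i) * M i j * v j) \<in> \<real> \<and>
                         Re (\<Sum>i<n. \<Sum>j<n. cnj (v i) * M i j * v j) \<ge> 0)"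

definition CZ :: "('z::topological_space \<Rightarrow> complex) opsys" where
  "CZ = \<lparr>os_carrier = {f. continuous_on UNIV f},
         os_smult = (\<lambda>c f z. c * f z),
         os_star = (\<lambda>f z. cnj (f z)),
         os_unit = (\<lambda>z. 1),
         os_pos = (\<lambda>n F. (\<forall>i<n. \<forall>j<n. continuous_on UNIV (F i j)) \<and>
                         (\<forall>z. psd_mat n (\<lambda>i j. F i j z)))\<rparr>"

text \<open>A G-action on a compact (Hausdorff) space Z = a G-operator system structure on C(Z).\<close>
definition G_space :: "('g \<Rightarrow> 'g \<Rightarrow> 'g pmf) \<Rightarrow> 'g
     \<Rightarrow> ('g \<Rightarrow> ('z::topological_space \<Rightarrow> complex) \<Rightarrow> ('z \<Rightarrow> complex)) \<Rightarrow> bool" where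
  "G_space cv e \<alpha> \<longleftrightarrow> G_opsys cv e CZ \<alpha>"

section \<open>Probability measures on Z, represented as states on C(Z) (Riesz)\<close>

definition is_state :: "(('z::topological_space \<Rightarrow> complex) \<Rightarrow> complex) \<Rightarrow> bool" where
  "is_state \<mu> \<longleftrightarrow>
     (\<forall>f\<in>os_carrier (CZ::('z \<Rightarrow> complex) opsys). \<forall>h\<in>os_carrier (CZ::('z \<Rightarrow> complex) opsys).
         \<mu> (f + h) = \<mu> f + \<mu> h) \<and>
     (\<forall>c. \<forall>f\<in>os_carrier (CZ::('z \<Rightarrow> complex) opsys). \<mu> (\<lambda>z. c * f z) = c * \<mu> f) \<and>
     (\<forall>f\<in>os_carrier (CZ::('z \<Rightarrow> complex) opsys).
         (\<forall>z. Im (f z) = 0 \<and> Re (f z) \<ge> 0) \<longrightarrow> Im (\<mu> f) = 0 \<and> Re (\<mu> f) \<ge> 0) \<and>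
     \<mu> (\<lambda>z. 1) = 1"

definition point_mass :: "'z \<Rightarrow> ('z \<Rightarrow> complex) \<Rightarrow> complex" where
  "point_mass z = (\<lambda>f. f z)"

definition dual_act :: "('g \<Rightarrow> ('z \<Rightarrow> complex) \<Rightarrow> ('z \<Rightarrow> complex)) \<Rightarrow> 'g
     \<Rightarrow> (('z \<Rightarrow> complex) \<Rightarrow> complex) \<Rightarrow> ('z \<Rightarrow> complex) \<Rightarrow> complex" where
  "dual_act \<alpha> g \<mu> = (\<lambda>f. \<mu> (\<alpha> g f))"

definition wstar_closure :: "((('z::topological_space) \<Rightarrow> complex) \<Rightarrow> complex) set
     \<Rightarrow> (('z \<Rightarrow> complex) \<Rightarrow> complex) set" where
  "wstar_closure A = {\<psi>. \<forall>\<epsilon>>0. \<forall>F. finite F \<and> F \<subseteq> os_carrier (CZ::('z \<Rightarrow> complex) opsys) \<longrightarrow>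
        (\<exists>\<phi>\<in>A. \<forall>f\<in>F. cmod (\<phi> f - \<psi> f) < \<epsilon>)}"

definition conv_hull_fun :: "(('z \<Rightarrow> complex) \<Rightarrow> complex) set \<Rightarrow> (('z \<Rightarrow> complex) \<Rightarrow> complex) set" where
  "conv_hull_fun A = {\<psi>. \<exists>(n::nat) t \<phi>. (\<forall>i<n. \<phi> i \<in> A \<and> t i \<ge> (0::real)) \<and> (\<Sum>i<n. t i) = 1 \<and>
        \<psi> = (\<lambda>f. \<Sum>i<n. complex_of_real (t i) * \<phi> i f)}"

definition G_minimal :: "('g \<Rightarrow> ('z::topological_space \<Rightarrow> complex) \<Rightarrow> ('z \<Rightarrow> complex)) \<Rightarrow> bool" where
  "G_minimal \<alpha> \<longleftrightarrow> (\<forall>z. \<forall>\<mu>. is_state \<mu> \<longrightarrow>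
       \<mu> \<in> wstar_closure (conv_hull_fun {dual_act \<alpha> g (point_mass z) | g. True}))"

definition G_strongly_proximal :: "('g \<Rightarrow> ('z::topological_space \<Rightarrow> complex) \<Rightarrow> ('z \<Rightarrow> complex)) \<Rightarrow> bool" where
  "G_strongly_proximal \<alpha> \<longleftrightarrow> (\<forall>\<mu>. is_state \<mu> \<longrightarrow>
       (\<exists>z. point_mass z \<in> wstar_closure {dual_act \<alpha> g \<mu> | g. True}))"

definition G_boundary :: "('g \<Rightarrow> ('z::topological_space \<Rightarrow> complex) \<Rightarrow> ('z \<Rightarrow> complex)) \<Rightarrow> bool" where
  "G_boundary \<alpha> \<longleftrightarrow> G_minimal \<alpha> \<and> G_strongly_proximal \<alpha>"

text \<open>G-injectivity relative to all G-operator systems R whose elements live in the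
  type 'r.\<close>
definition G_injective :: "('g \<Rightarrow> 'g \<Rightarrow> 'g pmf) \<Rightarrow> 'g
     \<Rightarrow> ('g \<Rightarrow> ('x::topological_space \<Rightarrow> complex) \<Rightarrow> ('x \<Rightarrow> complex)) \<Rightarrow> ('r::ab_group_add) itself \<Rightarrow> bool" where
  "G_injective cv e \<alpha> _ \<longleftrightarrow>
     (\<forall>(R::'r opsys) \<beta> S (\<phi>::'r \<Rightarrow> ('x \<Rightarrow> complex)).
        G_opsys cv e R \<beta> \<and> S \<subseteq> os_carrier R \<and> G_opsys cv e (os_restrict R S) \<beta> \<and>
        ucp (os_restrict R S) CZ \<phi> \<and> G_equivariant (os_restrict R S) \<beta> \<alpha> \<phi> \<longrightarrow>
        (\<exists>\<psi>. ucp R CZ \<psi> \<and> G_equivariant R \<beta> \<alpha> \<psi> \<and> (\<forall>x\<in>S. \<psi> x = \<phi> x)))"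

definition G_rigid :: "('g \<Rightarrow> ('x::topological_space \<Rightarrow> complex) \<Rightarrow> ('x \<Rightarrow> complex)) \<Rightarrow> bool" where
  "G_rigid \<alpha> \<longleftrightarrow>
     (\<forall>\<phi>. ucp CZ CZ \<phi> \<and> G_equivariant CZ \<alpha> \<alpha> \<phi> \<longrightarrow>
        (\<forall>f\<in>os_carrier (CZ::('x \<Rightarrow> complex) opsys). \<phi> f = f))"

end

theory Submission
  imports Defs
begin

text \<open>Both parts rest on one property of a boundary X: a continuous function D on X vanishes
  as soon as there are states \<mu> with \<mu>(g g' D) uniformly small in g and g'. Indeed, strong
  proximality moves \<mu> weak* close to a point mass at some x, so all translates g' D are small
  at x; minimality puts every point mass into the weak* closed convex hull of the translates of
  the point mass at x, so D is small everywhere.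

  If \<phi> : C(X) \<rightarrow> C(Y) is equivariant ucp and \<phi> D = 0, then each state f \<mapsto> \<phi> f y annihilates
  all g g' D. If \<phi> : C(X) \<rightarrow> C(X) is equivariant ucp, f is real and D = \<phi> f - f, then
  g g' D = \<phi> a - a with a = g g' f, and the Cesaro states
  f \<mapsto> (1/n) (f + \<phi> f + \<dots> + \<phi>^(n-1) f)(y) turn this into a telescoping sum of size
  at most 2 \<parallel>f\<parallel> / n.\<close>

lemma CZ_simps:
  "os_carrier (CZ::('a::topological_space \<Rightarrow> complex) opsys) = {f. continuous_on UNIV f}"
  "os_smult (CZ::('a::topological_space \<Rightarrow> complex) opsys) = (\<lambda>c f z. c * f z)"
  "os_unit (CZ::('a::topological_space \<Rightarrow> complex) opsys) = (\<lambda>z. 1)"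
  "os_pos (CZ::('a::topological_space \<Rightarrow> complex) opsys) = (\<lambda>n F.
     (\<forall>i<n. \<forall>j<n. continuous_on UNIV (F i j)) \<and> (\<forall>z. psd_mat n (\<lambda>i j. F i j z)))"
  by (simp_all add: CZ_def)

lemma psd_mat_1_iff: "psd_mat (Suc 0) (\<lambda>i j. a) \<longleftrightarrow> a \<in> \<real> \<and> Re a \<ge> 0"
proof
  assume "psd_mat (Suc 0) (\<lambda>i j. a)"
  from this[unfolded psd_mat_def, rule_format, of "\<lambda>_. 1"] show "a \<in> \<real> \<and> Re a \<ge> 0"
    by simp
next
  assume "a \<in> \<real> \<and> Re a \<ge> 0"
  then obtain r where r: "a = of_real r" "r \<ge> 0" by (auto elim!: Reals_cases)
  show "psd_mat (Suc 0) (\<lambda>i j. a)" unfolding psd_mat_def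
  proof
    fix v :: "nat \<Rightarrow> complex"
    have "cnj (v 0) * a * v 0 = a * (v 0 * cnj (v 0))" by (simp add: mult_ac)
    also have "\<dots> = of_real (r * ((Re (v 0))\<^sup>2 + (Im (v 0))\<^sup>2))"
      using r by (simp only: complex_mult_cnj of_real_mult)
    finally have eq: "cnj (v 0) * a * v 0 = of_real (r * ((Re (v 0))\<^sup>2 + (Im (v 0))\<^sup>2))" .
    have sum: "(\<Sum>i<Suc 0. \<Sum>j<Suc 0. cnj (v i) * a * v j) = cnj (v 0) * a * v 0" by simp
    show "(\<Sum>i<Suc 0. \<Sum>j<Suc 0. cnj (v i) * a * v j) \<in> \<real> \<and>
          0 \<le> Re (\<Sum>i<Suc 0. \<Sum>j<Suc 0. cnj (v i) * a * v j)"
      unfolding sum eq using r by simp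
  qed
qed

lemma ucp_funpow: "ucp R R \<psi> \<Longrightarrow> ucp R R (\<psi> ^^ n)"
  by (induction n) (auto simp: ucp_def)

lemma G_space_ucp: "G_space cv e \<alpha> \<Longrightarrow> ucp CZ CZ (\<alpha> g)"
  by (simp add: G_space_def G_opsys_def)

lemma G_equivariantD:
  "G_equivariant CZ \<alpha> \<beta> \<phi> \<Longrightarrow> continuous_on UNIV f \<Longrightarrow> \<phi> (\<alpha> g f) = \<beta> g (\<phi> f)"
  by (simp add: G_equivariant_def CZ_simps)

locale ucp_CZ =
  fixes \<psi> :: "('a::topological_space \<Rightarrow> complex) \<Rightarrow> ('b::topological_space \<Rightarrow> complex)"
  assumes ucp: "ucp CZ CZ \<psi>"
begin

lemma continuous: "continuous_on UNIV f \<Longrightarrow> continuous_on UNIV (\<psi> f)"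
  and add: "continuous_on UNIV f \<Longrightarrow> continuous_on UNIV h \<Longrightarrow> \<psi> (f + h) = \<psi> f + \<psi> h"
  and smult: "continuous_on UNIV f \<Longrightarrow> \<psi> (\<lambda>z. c * f z) = (\<lambda>z. c * \<psi> f z)"
  and unit: "\<psi> (\<lambda>z. 1) = (\<lambda>z. 1)"
  and positive: "os_pos CZ n A \<Longrightarrow> os_pos CZ n (\<lambda>i j. \<psi> (A i j))"
  using ucp unfolding ucp_def CZ_simps by auto

lemma diff:
  assumes "continuous_on UNIV f" "continuous_on UNIV h"
  shows "\<psi> (f - h) = \<psi> f - \<psi> h"
proof -
  have "continuous_on UNIV (\<lambda>z. (-1) * h z)" using assms(2) by (intro continuous_intros)
  have "f - h = f + (\<lambda>z. (-1) * h z)" by auto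
  then have "\<psi> (f - h) = \<psi> (f + (\<lambda>z. (-1) * h z))" by (rule arg_cong)
  also have "\<dots> = \<psi> f + \<psi> (\<lambda>z. (-1) * h z)"
    by (rule add[OF assms(1) \<open>continuous_on UNIV (\<lambda>z. (-1) * h z)\<close>])
  also have "\<dots> = \<psi> f + (\<lambda>z. (-1) * \<psi> h z)" by (subst smult[OF assms(2)]) (rule refl)
  also have "\<dots> = \<psi> f - \<psi> h" by auto
  finally show ?thesis .
qed

lemma const: "\<psi> (\<lambda>z. c) = (\<lambda>z. c)"
  using smult[of "\<lambda>z. 1" c] unit by simp

lemma zero: "\<psi> 0 = 0"
  using const[of 0] by (simp add: zero_fun_def)

lemma nonneg:
  assumes "continuous_on UNIV a" "\<forall>z. Im (a z) = 0 \<and> Re (a z) \<ge> 0"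
  shows "Im (\<psi> a w) = 0 \<and> Re (\<psi> a w) \<ge> 0"
proof -
  have "os_pos CZ (Suc 0) (\<lambda>i j. a)"
    using assms by (auto simp: CZ_simps psd_mat_1_iff complex_is_Real_iff)
  from positive[OF this] show ?thesis by (simp add: CZ_simps psd_mat_1_iff complex_is_Real_iff)
qed

lemma real_bounded:
  assumes a: "continuous_on UNIV a" "\<forall>z. Im (a z) = 0 \<and> \<bar>Re (a z)\<bar> \<le> M"
  shows "Im (\<psi> a w) = 0 \<and> \<bar>Re (\<psi> a w)\<bar> \<le> M"
proof -
  let ?M = "\<lambda>z. complex_of_real M"
  have "continuous_on UNIV (?M - a)"
    unfolding fun_diff_def by (intro continuous_intros a(1))
  moreover have "continuous_on UNIV (?M + a)"
    unfolding plus_fun_def by (intro continuous_intros a(1))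
  moreover have "Im ((?M - a) z) = 0 \<and> Re ((?M - a) z) \<ge> 0"
    and "Im ((?M + a) z) = 0 \<and> Re ((?M + a) z) \<ge> 0" for z
    using a(2)[rule_format, of z] by (auto simp: abs_le_iff)
  ultimately have "Im (\<psi> (?M - a) w) = 0 \<and> Re (\<psi> (?M - a) w) \<ge> 0"
    and "Im (\<psi> (?M + a) w) = 0 \<and> Re (\<psi> (?M + a) w) \<ge> 0"
    using nonneg by blast+
  moreover have "\<psi> (?M - a) = ?M - \<psi> a" "\<psi> (?M + a) = ?M + \<psi> a"
    using diff[OF _ a(1)] add[OF _ a(1)] const by auto
  ultimately show ?thesis by (auto simp: abs_le_iff)
qed

lemma state_at: "is_state (\<lambda>f. \<psi> f y)"
  unfolding is_state_def using add smult unit nonneg by (auto simp: CZ_simps)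

end

lemma ucp_CZ_funpow:
  fixes \<phi> :: "('a::topological_space \<Rightarrow> complex) \<Rightarrow> ('a \<Rightarrow> complex)"
  shows "ucp_CZ \<phi> \<Longrightarrow> ucp_CZ (\<phi> ^^ n)"
  unfolding ucp_CZ_def by (erule ucp_funpow)

definition cesaro_state ::
  "(('a \<Rightarrow> complex) \<Rightarrow> ('a \<Rightarrow> complex)) \<Rightarrow> nat \<Rightarrow> 'a \<Rightarrow> ('a \<Rightarrow> complex) \<Rightarrow> complex" where
  "cesaro_state \<phi> n y = (\<lambda>f. (\<Sum>i<n. (\<phi> ^^ i) f y) / of_nat n)"

lemma is_state_cesaro_state:
  fixes \<phi> :: "('a::topological_space \<Rightarrow> complex) \<Rightarrow> ('a \<Rightarrow> complex)"
  assumes "ucp_CZ \<phi>" "n > 0"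
  shows "is_state (cesaro_state \<phi> n y)"
proof -
  interpret \<phi>i: ucp_CZ "\<phi> ^^ i" for i using ucp_CZ_funpow[OF assms(1)] .
  have "Im (\<Sum>i<n. (\<phi> ^^ i) f y) = 0 \<and> 0 \<le> Re (\<Sum>i<n. (\<phi> ^^ i) f y)"
    if "continuous_on UNIV f" "\<forall>z. Im (f z) = 0 \<and> 0 \<le> Re (f z)" for f
    using \<phi>i.nonneg[OF that] by (simp add: sum_nonneg)
  then show ?thesis
    using assms(2) \<phi>i.add \<phi>i.smult \<phi>i.unit
    by (auto simp: is_state_def cesaro_state_def CZ_simps sum.distrib add_divide_distrib
        sum_distrib_left Im_divide Re_divide)
qed

lemma cesaro_state_coboundary_le:
  fixes \<phi> :: "('a::topological_space \<Rightarrow> complex) \<Rightarrow> ('a \<Rightarrow> complex)"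
  assumes "ucp_CZ \<phi>" and a: "continuous_on UNIV a" "\<forall>z. Im (a z) = 0 \<and> \<bar>Re (a z)\<bar> \<le> M"
  shows "cmod (cesaro_state \<phi> n y (\<phi> a - a)) \<le> 2 * M / n"
proof -
  interpret \<phi>i: ucp_CZ "\<phi> ^^ i" for i using ucp_CZ_funpow[OF assms(1)] .
  have "(\<phi> ^^ i) (\<phi> a - a) y = (\<phi> ^^ Suc i) a y - (\<phi> ^^ i) a y" for i
    using \<phi>i.diff[OF ucp_CZ.continuous[OF assms(1) a(1)] a(1)] by (simp add: funpow_swap1)
  then have "cesaro_state \<phi> n y (\<phi> a - a) = ((\<phi> ^^ n) a y - a y) / n"
    using sum_lessThan_telescope[of "\<lambda>i. (\<phi> ^^ i) a y" n] by (simp add: cesaro_state_def)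
  moreover have "Im ((\<phi> ^^ n) a y) = 0 \<and> \<bar>Re ((\<phi> ^^ n) a y)\<bar> \<le> M"
    using \<phi>i.real_bounded[OF a] .
  then have "cmod ((\<phi> ^^ n) a y - a y) \<le> 2 * M"
    using a(2)[rule_format, of y] cmod_le[of "(\<phi> ^^ n) a y - a y"] by (auto simp: abs_le_iff)
  ultimately show ?thesis by (simp add: norm_divide divide_right_mono)
qed

lemma is_state_point_mass: "is_state (point_mass z)"
  by (simp add: is_state_def point_mass_def)

lemma cmod_le_on_conv_hull_fun:
  fixes A :: "(('a \<Rightarrow> complex) \<Rightarrow> complex) set"
  assumes "\<And>\<phi>. \<phi> \<in> A \<Longrightarrow> cmod (\<phi> f) \<le> c" and "\<psi> \<in> conv_hull_fun A"
  shows "cmod (\<psi> f) \<le> c"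
proof -
  obtain n t and \<phi> :: "nat \<Rightarrow> ('a \<Rightarrow> complex) \<Rightarrow> complex"
    where \<phi>: "\<forall>i<n. \<phi> i \<in> A \<and> t i \<ge> (0::real)" and t: "(\<Sum>i<n. t i) = 1"
    and \<psi>: "\<psi> = (\<lambda>f. \<Sum>i<n. complex_of_real (t i) * \<phi> i f)"
    using assms(2) unfolding conv_hull_fun_def mem_Collect_eq by blast
  have "cmod (\<psi> f) \<le> (\<Sum>i<n. cmod (complex_of_real (t i) * \<phi> i f))"
    unfolding \<psi> by (rule norm_sum)
  also have "\<dots> \<le> (\<Sum>i<n. t i * c)"
    using \<phi> assms(1) by (intro sum_mono) (simp add: norm_mult mult_left_mono)
  also have "\<dots> = c"
    using t by (simp add: sum_distrib_right[symmetric])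
  finally show ?thesis .
qed

lemma cmod_le_on_wstar_closure:
  assumes "continuous_on UNIV f" and "\<And>\<phi>. \<phi> \<in> A \<Longrightarrow> cmod (\<phi> f) \<le> c"
    and "\<psi> \<in> wstar_closure A"
  shows "cmod (\<psi> f) \<le> c"
proof (rule field_le_epsilon)
  fix \<epsilon> :: real assume "\<epsilon> > 0"
  moreover have "finite {f} \<and> {f} \<subseteq> os_carrier CZ" using assms(1) by (simp add: CZ_simps)
  ultimately obtain \<phi> where "\<phi> \<in> A" "\<forall>h\<in>{f}. cmod (\<phi> h - \<psi> h) < \<epsilon>"
    using assms(3) unfolding wstar_closure_def mem_Collect_eq by blast
  with assms(2)[of \<phi>] show "cmod (\<psi> f) \<le> c + \<epsilon>"
    using norm_triangle_ineq2[of "\<psi> f" "\<phi> f"] norm_minus_commute[of "\<phi> f"] by fastforce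
qed

lemma G_boundary_eq_0:
  fixes \<alpha> :: "'g \<Rightarrow> ('x::topological_space \<Rightarrow> complex) \<Rightarrow> ('x \<Rightarrow> complex)"
  assumes "G_space cv e \<alpha>" "G_boundary \<alpha>" and D: "continuous_on UNIV D"
    and small: "\<And>\<epsilon>. \<epsilon> > 0 \<Longrightarrow> \<exists>\<mu>. is_state \<mu> \<and> (\<forall>g g'. cmod (\<mu> (\<alpha> g (\<alpha> g' D))) \<le> \<epsilon>)"
  shows "D = 0"
proof
  interpret \<alpha>: ucp_CZ "\<alpha> g" for g using G_space_ucp[OF assms(1)] by unfold_locales
  fix z
  have "cmod (D z) \<le> 0"
  proof (rule field_le_epsilon)
    fix \<epsilon> :: real assume "\<epsilon> > 0"
    then obtain \<mu> where "is_state \<mu>" and \<mu>: "\<And>g g'. cmod (\<mu> (\<alpha> g (\<alpha> g' D))) \<le> \<epsilon>"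
      using small by blast
    then obtain x where x: "point_mass x \<in> wstar_closure {dual_act \<alpha> g \<mu> | g. True}"
      using assms(2) by (auto simp: G_boundary_def G_strongly_proximal_def)
    have orbit: "cmod (point_mass x (\<alpha> g D)) \<le> \<epsilon>" for g
      by (rule cmod_le_on_wstar_closure[OF \<alpha>.continuous[OF D] _ x]) (auto simp: dual_act_def \<mu>)
    have "cmod (\<psi> D) \<le> \<epsilon>" if "\<psi> \<in> conv_hull_fun {dual_act \<alpha> g (point_mass x) | g. True}" for \<psi>
      by (rule cmod_le_on_conv_hull_fun[OF _ that]) (auto simp: dual_act_def orbit)
    moreover have "point_mass z \<in> wstar_closure (conv_hull_fun {dual_act \<alpha> g (point_mass x) | g. True})"
      using assms(2) is_state_point_mass unfolding G_boundary_def G_minimal_def by blast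
    ultimately have "cmod (point_mass z D) \<le> \<epsilon>"
      by (rule cmod_le_on_wstar_closure[OF D])
    then show "cmod (D z) \<le> 0 + \<epsilon>" by (simp add: point_mass_def)
  qed
  then show "D z = 0 z" by simp
qed

lemma G_equivariant_ucp_inj_on_boundary:
  fixes \<alpha>X :: "'g \<Rightarrow> ('x::topological_space \<Rightarrow> complex) \<Rightarrow> ('x \<Rightarrow> complex)"
    and \<alpha>Y :: "'g \<Rightarrow> ('y::topological_space \<Rightarrow> complex) \<Rightarrow> ('y \<Rightarrow> complex)"
  assumes "G_space cv e \<alpha>X" "G_space cv e \<alpha>Y" "G_boundary \<alpha>X"
    and "ucp (CZ :: ('x \<Rightarrow> complex) opsys) (CZ :: ('y \<Rightarrow> complex) opsys) \<phi>"
    and eq: "G_equivariant CZ \<alpha>X \<alpha>Y \<phi>"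
  shows "inj_on \<phi> (os_carrier (CZ :: ('x \<Rightarrow> complex) opsys))"
proof (rule inj_onI)
  interpret \<phi>: ucp_CZ \<phi> by unfold_locales fact
  interpret \<alpha>X: ucp_CZ "\<alpha>X g" for g using G_space_ucp[OF assms(1)] by unfold_locales
  interpret \<alpha>Y: ucp_CZ "\<alpha>Y g" for g using G_space_ucp[OF assms(2)] by unfold_locales
  fix f h :: "'x \<Rightarrow> complex"
  assume "f \<in> os_carrier CZ" "h \<in> os_carrier CZ" and "\<phi> f = \<phi> h"
  then have f: "continuous_on UNIV f" and h: "continuous_on UNIV h" and "\<phi> (f - h) = 0"
    using \<phi>.diff by (auto simp: CZ_simps)
  moreover have "continuous_on UNIV (f - h)"
    using f h unfolding fun_diff_def by (intro continuous_intros)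
  ultimately have "\<phi> (\<alpha>X g (\<alpha>X g' (f - h))) = 0" for g g'
    using G_equivariantD[OF eq] \<alpha>X.continuous \<alpha>Y.zero by simp
  then have "f - h = 0"
    using G_boundary_eq_0[OF assms(1,3) \<open>continuous_on UNIV (f - h)\<close>] \<phi>.state_at by fastforce
  then show "f = h" by simp
qed

lemma G_equivariant_ucp_fixes_real_on_boundary:
  fixes \<alpha> :: "'g \<Rightarrow> ('x::topological_space \<Rightarrow> complex) \<Rightarrow> ('x \<Rightarrow> complex)"
  assumes "G_space cv e \<alpha>" "G_boundary \<alpha>" "compact (UNIV :: 'x set)"
    and "ucp (CZ :: ('x \<Rightarrow> complex) opsys) CZ \<phi>" and eq: "G_equivariant CZ \<alpha> \<alpha> \<phi>"
    and f: "continuous_on UNIV f" and real: "\<forall>z. Im (f z) = 0"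
  shows "\<phi> f = f"
proof -
  interpret \<phi>: ucp_CZ \<phi> by unfold_locales fact
  interpret \<alpha>: ucp_CZ "\<alpha> g" for g using G_space_ucp[OF assms(1)] by unfold_locales
  obtain M where "M > 0" and "\<And>z. cmod (f z) \<le> M"
    using compact_imp_bounded[OF compact_continuous_image[OF f assms(3)]] by (auto simp: bounded_pos)
  then have f_bounded: "\<forall>z. Im (f z) = 0 \<and> \<bar>Re (f z)\<bar> \<le> M"
    using real abs_Re_le_cmod order_trans by blast
  have D: "continuous_on UNIV (\<phi> f - f)"
    using f \<phi>.continuous[OF f] unfolding fun_diff_def by (intro continuous_intros)
  have coboundary: "\<alpha> g (\<alpha> g' (\<phi> f - f)) = \<phi> (\<alpha> g (\<alpha> g' f)) - \<alpha> g (\<alpha> g' f)" for g g'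
    using \<alpha>.diff \<alpha>.continuous \<phi>.continuous f G_equivariantD[OF eq] by simp
  have "\<phi> f - f = 0"
  proof (rule G_boundary_eq_0[OF assms(1,2) D])
    fix \<epsilon> :: real assume "\<epsilon> > 0"
    obtain n :: nat where "2 * M / \<epsilon> < n" using reals_Archimedean2 by blast
    then have "2 * M < n * \<epsilon>" using \<open>\<epsilon> > 0\<close> by (simp add: pos_divide_less_eq)
    moreover from this have n: "n > 0" using \<open>M > 0\<close> by (auto intro: gr0I)
    ultimately have "2 * M / n \<le> \<epsilon>" by (simp add: pos_divide_le_eq mult.commute)
    moreover have "cmod (cesaro_state \<phi> n y (\<alpha> g (\<alpha> g' (\<phi> f - f)))) \<le> 2 * M / n" for y g g'
    proof -
      have "\<forall>z. Im (\<alpha> g' f z) = 0 \<and> \<bar>Re (\<alpha> g' f z)\<bar> \<le> M"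
        using \<alpha>.real_bounded[OF f f_bounded] by blast
      then have "\<forall>z. Im (\<alpha> g (\<alpha> g' f) z) = 0 \<and> \<bar>Re (\<alpha> g (\<alpha> g' f) z)\<bar> \<le> M"
        using \<alpha>.real_bounded[OF \<alpha>.continuous[OF f]] by blast
      then show ?thesis
        unfolding coboundary
        by (intro cesaro_state_coboundary_le \<phi>.ucp_CZ_axioms \<alpha>.continuous f)
    qed
    ultimately show "\<exists>\<mu>. is_state \<mu> \<and> (\<forall>g g'. cmod (\<mu> (\<alpha> g (\<alpha> g' (\<phi> f - f)))) \<le> \<epsilon>)"
      using is_state_cesaro_state[OF \<phi>.ucp_CZ_axioms n] by (meson order_trans)
  qed
  then show ?thesis by simp
qed

lemma G_boundary_rigid:
  fixes \<alpha> :: "'g \<Rightarrow> ('x::topological_space \<Rightarrow> complex) \<Rightarrow> ('x \<Rightarrow> complex)"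
  assumes "G_space cv e \<alpha>" "G_boundary \<alpha>" "compact (UNIV :: 'x set)"
  shows "G_rigid \<alpha>"
  unfolding G_rigid_def
proof (intro allI impI ballI)
  fix \<phi> f
  assume "ucp CZ CZ \<phi> \<and> G_equivariant CZ \<alpha> \<alpha> \<phi>" and "f \<in> os_carrier (CZ::('x \<Rightarrow> complex) opsys)"
  then have u: "ucp CZ CZ \<phi>" and eq: "G_equivariant CZ \<alpha> \<alpha> \<phi>" and f: "continuous_on UNIV f"
    by (auto simp: CZ_simps)
  interpret \<phi>: ucp_CZ \<phi> by unfold_locales fact
  define fr fi
    where "fr = (\<lambda>z. complex_of_real (Re (f z)))" and "fi = (\<lambda>z. complex_of_real (Im (f z)))"
  have fr: "continuous_on UNIV fr" unfolding fr_def by (intro continuous_intros f)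
  have fi: "continuous_on UNIV fi" unfolding fi_def by (intro continuous_intros f)
  have "\<phi> fr = fr" "\<phi> fi = fi"
    using G_equivariant_ucp_fixes_real_on_boundary[OF assms u eq] fr fi by (auto simp: fr_def fi_def)
  moreover have "f = fr + (\<lambda>z. \<i> * fi z)"
    by (auto simp: fr_def fi_def complex_eq_iff)
  moreover have "continuous_on UNIV (\<lambda>z. \<i> * fi z)" using fi by (intro continuous_intros)
  ultimately show "\<phi> f = f"
    using \<phi>.add[OF fr] \<phi>.smult[OF fi] by simp
qed

theorem theorem4p9:
  fixes cv :: "'g \<Rightarrow> 'g \<Rightarrow> 'g pmf" and e :: 'g and iv :: "'g \<Rightarrow> 'g"
    and \<alpha>X :: "'g \<Rightarrow> ('x::t2_space \<Rightarrow> complex) \<Rightarrow> ('x \<Rightarrow> complex)"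
    and \<alpha>Y :: "'g \<Rightarrow> ('y::t2_space \<Rightarrow> complex) \<Rightarrow> ('y \<Rightarrow> complex)"
  assumes "hypergroup cv e iv"
    and "compact (UNIV :: 'x set)" and "compact (UNIV :: 'y set)"
    and "G_space cv e \<alpha>X" and "G_space cv e \<alpha>Y"
    and "G_boundary \<alpha>X" and "G_minimal \<alpha>Y"
  shows "(\<forall>\<phi>. ucp (CZ :: ('x \<Rightarrow> complex) opsys) (CZ :: ('y \<Rightarrow> complex) opsys) \<phi>
               \<and> G_equivariant (CZ :: ('x \<Rightarrow> complex) opsys) \<alpha>X \<alpha>Y \<phi>
            \<longrightarrow> inj_on \<phi> (os_carrier (CZ :: ('x \<Rightarrow> complex) opsys)))
       \<and> (G_injective cv e \<alpha>X TYPE('g \<Rightarrow> 'x \<Rightarrow> complex) \<longrightarrow> G_rigid \<alpha>X)"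
  using G_equivariant_ucp_inj_on_boundary[OF assms(4,5,6)] G_boundary_rigid[OF assms(4,6,2)]
  by blast

end
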